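(* In the setting of the context, let $1\le i<j\le m$ be integers and $p',q$ arbitrary integers. Then $|s_i^{p'}s_j^{q}|_{S_m}=|p'|+|q|$.
   Context: $H$ is a finitely presented group with finite generating set $T$, containing a free subgroup $F$ of rank $p$ with free basis $\{d_1,\dots,d_p\}\subset T$ (standing assumption: $\mathrm{Dist}_F^H$ admits an exponentially bounded sequence of palindromic certificates in $F$). $F_x,F_y,F_z$ are free of rank $p$ with bases $R_x=\{x_i\},R_y=\{y_i\},R_z=\{z_i\}$. $G_1=[H\ast_{\langle d_i=x_iy_i^{-1}\rangle}(F_x\times F_y\times F_z)]\times\langle s_1\rangle$; $a_i=x_iz_i$, $b_i=y_iz_i$, $R_{xz}=\{a_i\}$, $R_{yz}=\{b_i\}$; $G_2=\langle G_1,s_2\mid s_2^{-1}a_is_2=b_i,\ 1\le i\le p\rangle$; $G_k=\langle G_{k-1},s_k\mid s_k^{-1}s_1s_k=s_{k-1}\rangle$ for $k\ge3$. $S_1=T\cup R_x\cup R_y\cup R_z\cup R_{xz}\cup R_{yz}\cup\{s_1\}$, $S_k=S_{k-1}\cup\{s_k\}$; $|\cdot|_{S_m}$ is word length in $G_m$. *)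

theory Defs
  imports Main
begin

text \<open>A word over generators of type 'g is a list of letters (g, True) = g and
 (g, False) = g^-1. A presentation is given by a set of relator words; two words
 represent the same element of the presented group iff they are related by the
 congruence generated by free cancellation and insertion/deletion of relators.\<close>

type_synonym 'g word = "('g \<times> bool) list"

definition inv_word :: "'g word \<Rightarrow> 'g word" where
  "inv_word w = rev (map (\<lambda>(g, b). (g, \<not> b)) w)"

inductive word_eq :: "'g word set \<Rightarrow> 'g word \<Rightarrow> 'g word \<Rightarrow> bool" for R where
  refl: "word_eq R w w"
| sym: "word_eq R u v \<Longrightarrow> word_eq R v u"
| trans: "word_eq R u v \<Longrightarrow> word_eq R v w \<Longrightarrow> word_eq R u w"
| cancel: "word_eq R (u @ [(g, b), (g, \<not> b)] @ v) (u @ v)"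
| relator: "r \<in> R \<Longrightarrow> word_eq R (u @ r @ v) (u @ v)"

definition rel_eq :: "'g word \<Rightarrow> 'g word \<Rightarrow> 'g word" where
  "rel_eq u v = u @ inv_word v"

definition commutator :: "'g \<Rightarrow> 'g \<Rightarrow> 'g word" where
  "commutator g h = [(g, True), (h, True), (g, False), (h, False)]"

definition gen_pow :: "'g \<Rightarrow> int \<Rightarrow> 'g word" where
  "gen_pow g n = (if 0 \<le> n then replicate (nat n) (g, True) else replicate (nat (- n)) (g, False))"

definition word_length :: "'g word set \<Rightarrow> 'g set \<Rightarrow> 'g word \<Rightarrow> nat" where
  "word_length R S w = (LEAST n. \<exists>v. set (map fst v) \<subseteq> S \<and> length v = n \<and> word_eq R v w)"

definition freely_reduced :: "'g word \<Rightarrow> bool" where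
  "freely_reduced w \<longleftrightarrow> (\<forall>k. Suc k < length w \<longrightarrow> \<not> (fst (w ! k) = fst (w ! Suc k) \<and> snd (w ! k) \<noteq> snd (w ! Suc k)))"

text \<open>Generators: those of H (TG t, t \<in> T), x_i, y_i, z_i, a_i = x_i z_i, b_i = y_i z_i
 (indices i < p, i.e. i = 0..p-1 corresponds to 1..p), and s_k (k \<ge> 1).\<close>
datatype 'a gen = TG 'a | X nat | Y nat | Z nat | A nat | B nat | S nat

definition lift_word :: "'a word \<Rightarrow> 'a gen word" where
  "lift_word w = map (\<lambda>(t, b). (TG t, b)) w"

definition letter :: "'g \<Rightarrow> 'g word" where
  "letter g = [(g, True)]"

definition gens1 :: "'a set \<Rightarrow> nat \<Rightarrow> 'a gen set" where
  "gens1 T p = TG ` T \<union> X ` {..<p} \<union> Y ` {..<p} \<union> Z ` {..<p} \<union> A ` {..<p} \<union> B ` {..<p} \<union> {S 1}"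

definition gensm :: "'a set \<Rightarrow> nat \<Rightarrow> nat \<Rightarrow> 'a gen set" where
  "gensm T p m = gens1 T p \<union> S ` {2..m}"

text \<open>Relators of G_1 = [H *_{d_i = x_i y_i^-1} (F_x \<times> F_y \<times> F_z)] \<times> <s_1>,
 with the extra generators a_i, b_i defined by a_i = x_i z_i, b_i = y_i z_i.\<close>
definition rels1 :: "'a word set \<Rightarrow> 'a set \<Rightarrow> (nat \<Rightarrow> 'a) \<Rightarrow> nat \<Rightarrow> 'a gen word set" where
  "rels1 RH T d p =
     lift_word ` RH
   \<union> {commutator (X i) (Y j) | i j. i < p \<and> j < p}
   \<union> {commutator (X i) (Z j) | i j. i < p \<and> j < p}
   \<union> {commutator (Y i) (Z j) | i j. i < p \<and> j < p}
   \<union> {rel_eq (letter (TG (d i))) [(X i, True), (Y i, False)] | i. i < p}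
   \<union> {rel_eq (letter (A i)) [(X i, True), (Z i, True)] | i. i < p}
   \<union> {rel_eq (letter (B i)) [(Y i, True), (Z i, True)] | i. i < p}
   \<union> {commutator (S 1) g | g. g \<in> gens1 T p}"

definition relsm :: "'a word set \<Rightarrow> 'a set \<Rightarrow> (nat \<Rightarrow> 'a) \<Rightarrow> nat \<Rightarrow> nat \<Rightarrow> 'a gen word set" where
  "relsm RH T d p m =
     rels1 RH T d p
   \<union> {rel_eq [(S 2, False), (A i, True), (S 2, True)] (letter (B i)) | i. i < p \<and> 2 \<le> m}
   \<union> {rel_eq [(S k, False), (S 1, True), (S k, True)] (letter (S (k - 1))) | k. 3 \<le> k \<and> k \<le> m}"

end

theory Submission
  imports Defs
begin

text \<open>
  The word itself shows that the length is at most |p'| + |q|. For the lower bound, map G_m to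
  the free group F(a, t) by s_1 \<mapsto> a, s_k \<mapsto> \<psi>^(m-k)(t) for 2 \<le> k \<le> m and all other
  generators \<mapsto> 1, where \<psi> is the endomorphism a \<mapsto> a, t \<mapsto> t^-1 a t. The relation
  s_k^-1 s_1 s_k = s_(k-1) holds because \<psi>^(m-k)(t^-1 a t) = \<psi>^(m-k+1)(t), and every other
  relator is sent to a trivial word. In particular H is sent to 1.

  A finite-state scan of reduced words inverts \<psi> on its image; when the word leaves the image,
  the scan collapses the rest onto a single generator. Hence appending the image of a generator of
  G_(k+1) changes the result of the scan by at most the image of one generator of G_k. Scanning
  m - j times and then taking the l1-norm of the abelianisation therefore gives a 1-Lipschitz
  function on G_m. Its value on s_i^p' s_j^q is |p'| + |q|, because that element is sent to \<psi>^(m-j)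
  of a word whose exponent sums are p' in a and q in t.
\<close>

section \<open>Free reduction\<close>

fun inv_letter :: "'g \<times> bool \<Rightarrow> 'g \<times> bool" where
  "inv_letter (g, b) = (g, \<not> b)"

lemma inv_letter_inv_letter [simp]: "inv_letter (inv_letter x) = x"
  by (cases x) simp

lemma fst_inv_letter [simp]: "fst (inv_letter x) = fst x"
  by (cases x) simp

lemma inv_word_Nil [simp]: "inv_word [] = []"
  by (simp add: inv_word_def)

lemma inv_word_Cons [simp]: "inv_word (x # w) = inv_word w @ [inv_letter x]"
  by (cases x) (simp add: inv_word_def)

lemma inv_word_append [simp]: "inv_word (u @ v) = inv_word v @ inv_word u"
  by (simp add: inv_word_def)

lemma inv_word_inv_word [simp]: "inv_word (inv_word w) = w"
  by (induction w) auto

lemma freely_reduced_Nil [simp]: "freely_reduced []"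
  by (simp add: freely_reduced_def)

lemma freely_reduced_single [simp]: "freely_reduced [x]"
  by (simp add: freely_reduced_def)

lemma freely_reduced_Cons_Cons [simp]:
  "freely_reduced (x # y # w) \<longleftrightarrow> y \<noteq> inv_letter x \<and> freely_reduced (y # w)"
proof -
  have "y = inv_letter x \<longleftrightarrow> fst x = fst y \<and> snd x \<noteq> snd y"
    by (cases x; cases y) auto
  then show ?thesis
    unfolding freely_reduced_def by (auto simp: less_Suc_eq_0_disj)
qed

lemma freely_reduced_snoc:
  "freely_reduced (w @ [x]) \<longleftrightarrow> freely_reduced w \<and> (w = [] \<or> x \<noteq> inv_letter (last w))"
  by (induction w rule: induct_list012) auto

lemma freely_reduced_butlast: "freely_reduced w \<Longrightarrow> freely_reduced (butlast w)"
  by (cases w rule: rev_cases) (simp_all add: freely_reduced_snoc)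

definition red_snoc :: "'g word \<Rightarrow> 'g \<times> bool \<Rightarrow> 'g word" where
  "red_snoc w x = (if w \<noteq> [] \<and> last w = inv_letter x then butlast w else w @ [x])"

lemma freely_reduced_red_snoc: "freely_reduced w \<Longrightarrow> freely_reduced (red_snoc w x)"
  by (auto simp: red_snoc_def freely_reduced_snoc freely_reduced_butlast)

lemma red_snoc_inv_letter:
  assumes "freely_reduced w"
  shows "red_snoc (red_snoc w x) (inv_letter x) = w"
proof (cases "w \<noteq> [] \<and> last w = inv_letter x")
  case True
  then have w: "w = butlast w @ [inv_letter x]"
    by (metis append_butlast_last_id)
  with assms have "butlast w = [] \<or> last (butlast w) \<noteq> x"
    using freely_reduced_snoc[of "butlast w" "inv_letter x"] by auto
  then have "red_snoc (butlast w) (inv_letter x) = w"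
    by (subst (2) w) (auto simp: red_snoc_def)
  with True show ?thesis
    by (simp add: red_snoc_def)
qed (auto simp: red_snoc_def)

lemma red_snoc_red_snoc_cancel [simp]:
  assumes "freely_reduced w"
  shows "red_snoc (red_snoc w (g, b)) (g, \<not> b) = w" "red_snoc (red_snoc w (g, \<not> b)) (g, b) = w"
  using red_snoc_inv_letter[OF assms, of "(g, b)"] red_snoc_inv_letter[OF assms, of "(g, \<not> b)"]
  by simp_all

definition red_append :: "'g word \<Rightarrow> 'g word \<Rightarrow> 'g word" where
  "red_append y w = foldl red_snoc y w"

lemma red_append_Nil [simp]: "red_append y [] = y"
  by (simp add: red_append_def)

lemma red_append_Cons [simp]: "red_append y (x # w) = red_append (red_snoc y x) w"
  by (simp add: red_append_def)

lemma red_append_append [simp]: "red_append y (u @ v) = red_append (red_append y u) v"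
  by (simp add: red_append_def)

lemma freely_reduced_red_append: "freely_reduced y \<Longrightarrow> freely_reduced (red_append y w)"
  by (induction w arbitrary: y) (auto simp: freely_reduced_red_snoc)

lemma red_append_cancel: "freely_reduced y \<Longrightarrow> red_append y (w @ inv_word w) = y"
proof (induction w arbitrary: y)
  case (Cons x w)
  then have "red_append y ((x # w) @ inv_word (x # w)) = red_snoc (red_snoc y x) (inv_letter x)"
    by (simp add: freely_reduced_red_snoc)
  also have "\<dots> = y"
    using Cons.prems by (rule red_snoc_inv_letter)
  finally show ?case .
qed simp

definition word_hom :: "('g \<Rightarrow> 'h word) \<Rightarrow> 'g word \<Rightarrow> 'h word" where
  "word_hom f w = concat (map (\<lambda>(g, b). if b then f g else inv_word (f g)) w)"

lemma word_hom_Nil [simp]: "word_hom f [] = []"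
  by (simp add: word_hom_def)

lemma word_hom_Cons [simp]:
  "word_hom f (x # w) = (if snd x then f (fst x) else inv_word (f (fst x))) @ word_hom f w"
  by (cases x) (simp add: word_hom_def)

lemma word_hom_append [simp]: "word_hom f (u @ v) = word_hom f u @ word_hom f v"
  by (simp add: word_hom_def)

lemma word_hom_inv_word [simp]: "word_hom f (inv_word w) = inv_word (word_hom f w)"
  by (induction w) auto

definition word_pow :: "'g word \<Rightarrow> int \<Rightarrow> 'g word" where
  "word_pow w n =
     (if 0 \<le> n then concat (replicate (nat n) w) else concat (replicate (nat (- n)) (inv_word w)))"

lemma word_hom_gen_pow: "word_hom f (gen_pow g n) = word_pow (f g) n"
proof -
  have "word_hom f (replicate k x) = concat (replicate k (word_hom f [x]))" for k x
    by (induction k) auto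
  then show ?thesis
    by (simp add: gen_pow_def word_pow_def)
qed

lemma word_hom_word_pow: "word_hom f (word_pow w n) = word_pow (word_hom f w) n"
proof -
  have "word_hom f (concat (replicate k u)) = concat (replicate k (word_hom f u))" for k u
    by (induction k) auto
  then show ?thesis
    by (simp add: word_pow_def)
qed

lemma funpow_word_hom_append [simp]:
  fixes f :: "'g \<Rightarrow> 'g word"
  shows "(word_hom f ^^ n) (u @ v) = (word_hom f ^^ n) u @ (word_hom f ^^ n) v"
  by (induction n) auto

lemma funpow_word_hom_inv_word [simp]:
  fixes f :: "'g \<Rightarrow> 'g word"
  shows "(word_hom f ^^ n) (inv_word w) = inv_word ((word_hom f ^^ n) w)"
  by (induction n) auto

lemma funpow_word_hom_word_pow:
  fixes f :: "'g \<Rightarrow> 'g word"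
  shows "(word_hom f ^^ n) (word_pow w k) = word_pow ((word_hom f ^^ n) w) k"
  by (induction n) (auto simp: word_hom_word_pow)

lemma red_append_word_hom_eq:
  assumes "word_eq R u v"
    and "\<And>r y. r \<in> R \<Longrightarrow> freely_reduced y \<Longrightarrow> red_append y (word_hom f r) = y"
    and "freely_reduced y"
  shows "red_append y (word_hom f u) = red_append y (word_hom f v)"
  using assms(1,3)
proof (induction arbitrary: y rule: word_eq.induct)
  case (cancel u g b v)
  define w where "w = word_hom f [(g, b)]"
  have "word_hom f (u @ [(g, b), (g, \<not> b)] @ v) = word_hom f u @ (w @ inv_word w) @ word_hom f v"
    by (simp add: w_def)
  then have "red_append y (word_hom f (u @ [(g, b), (g, \<not> b)] @ v))
      = red_append (red_append (red_append y (word_hom f u)) (w @ inv_word w)) (word_hom f v)"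
    by (simp only: red_append_append)
  also have "\<dots> = red_append (red_append y (word_hom f u)) (word_hom f v)"
    by (simp only: red_append_cancel[OF freely_reduced_red_append[OF cancel.prems]])
  finally show ?case
    by simp
next
  case (relator r u v)
  then show ?case
    using assms(2)[OF relator.hyps freely_reduced_red_append] by simp
qed simp_all

lemma word_length_eqI:
  assumes "set (map fst w) \<subseteq> gs"
    and "\<And>v. set (map fst v) \<subseteq> gs \<Longrightarrow> word_eq R v w \<Longrightarrow> length w \<le> length v"
  shows "word_length R gs w = length w"
  unfolding word_length_def
proof (rule Least_equality)
  show "\<exists>v. set (map fst v) \<subseteq> gs \<and> length v = length w \<and> word_eq R v w"
    using assms(1) word_eq.refl by blast
qed (use assms(2) in blast)

definition letter_sign :: "'g \<times> bool \<Rightarrow> int" where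
  "letter_sign x = (if snd x then 1 else -1)"

definition exp_sum :: "'g word \<Rightarrow> int" where
  "exp_sum w = sum_list (map letter_sign w)"

definition gen_exp_sum :: "'g \<Rightarrow> 'g word \<Rightarrow> int" where
  "gen_exp_sum g w = exp_sum (filter (\<lambda>x. fst x = g) w)"

lemma letter_sign_inv_letter [simp]: "letter_sign (inv_letter x) = - letter_sign x"
  by (cases x) (simp add: letter_sign_def)

lemma exp_sum_Nil [simp]: "exp_sum [] = 0"
  by (simp add: exp_sum_def)

lemma exp_sum_Cons [simp]: "exp_sum (x # w) = letter_sign x + exp_sum w"
  by (simp add: exp_sum_def)

lemma exp_sum_append [simp]: "exp_sum (u @ v) = exp_sum u + exp_sum v"
  by (simp add: exp_sum_def)

lemma exp_sum_inv_word [simp]: "exp_sum (inv_word w) = - exp_sum w"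
  by (induction w) auto

lemma gen_exp_sum_Nil [simp]: "gen_exp_sum g [] = 0"
  by (simp add: gen_exp_sum_def)

lemma gen_exp_sum_Cons [simp]:
  "gen_exp_sum g (x # w) = (if fst x = g then letter_sign x else 0) + gen_exp_sum g w"
  by (simp add: gen_exp_sum_def)

lemma gen_exp_sum_append [simp]: "gen_exp_sum g (u @ v) = gen_exp_sum g u + gen_exp_sum g v"
  by (simp add: gen_exp_sum_def)

lemma gen_exp_sum_inv_word [simp]: "gen_exp_sum g (inv_word w) = - gen_exp_sum g w"
  by (induction w) auto

lemma gen_exp_sum_word_pow [simp]: "gen_exp_sum g (word_pow w n) = n * gen_exp_sum g w"
proof -
  have "gen_exp_sum g (concat (replicate k u)) = int k * gen_exp_sum g u" for k u
    by (induction k) (auto simp: algebra_simps)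
  then show ?thesis
    by (simp add: word_pow_def)
qed

lemma gen_exp_sum_red_snoc: "gen_exp_sum g (red_snoc w x) = gen_exp_sum g (w @ [x])"
proof (cases "w \<noteq> [] \<and> last w = inv_letter x")
  case True
  then have "w = butlast w @ [inv_letter x]"
    by (metis append_butlast_last_id)
  then have "gen_exp_sum g w = gen_exp_sum g (butlast w @ [inv_letter x])"
    by simp
  with True show ?thesis
    by (simp add: red_snoc_def)
qed (auto simp: red_snoc_def)

lemma gen_exp_sum_red_append: "gen_exp_sum g (red_append y w) = gen_exp_sum g y + gen_exp_sum g w"
  by (induction w arbitrary: y) (simp_all add: gen_exp_sum_red_snoc)

lemma gen_pow_succ: "0 \<le> n \<Longrightarrow> gen_pow g (1 + n) = (g, True) # gen_pow g n"
  by (simp add: gen_pow_def nat_add_distrib)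

lemma gen_pow_pred: "n \<le> 0 \<Longrightarrow> gen_pow g (- 1 + n) = (g, False) # gen_pow g n"
proof -
  assume "n \<le> 0"
  then have "nat (- (- 1 + n)) = Suc (nat (- n))"
    by simp
  with \<open>n \<le> 0\<close> show ?thesis
    by (simp add: gen_pow_def)
qed

lemma red_append_red_snoc_gen_pow:
  assumes "freely_reduced v"
  shows "red_append (red_snoc v (g, b)) (gen_pow g n) = red_append v (gen_pow g (letter_sign (g, b) + n))"
proof (cases b)
  case True
  show ?thesis
  proof (cases "0 \<le> n")
    case False
    then have "gen_pow g n = (g, False) # gen_pow g (1 + n)"
      using gen_pow_pred[of "1 + n" g] by simp
    with True show ?thesis
      using red_snoc_inv_letter[OF assms, of "(g, True)"] by (simp add: letter_sign_def)
  qed (simp add: True gen_pow_succ letter_sign_def)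
next
  case False
  show ?thesis
  proof (cases "0 < n")
    case True
    then have "gen_pow g n = (g, True) # gen_pow g (- 1 + n)"
      using gen_pow_succ[of "- 1 + n" g] by simp
    with False show ?thesis
      using red_snoc_inv_letter[OF assms, of "(g, False)"] by (simp add: letter_sign_def)
  next
    case False
    then have "gen_pow g (- 1 + n) = (g, False) # gen_pow g n"
      by (intro gen_pow_pred) simp
    with \<open>\<not> b\<close> show ?thesis
      by (simp add: letter_sign_def)
  qed
qed

lemma red_append_collapse:
  "freely_reduced v \<Longrightarrow> red_append v (map (\<lambda>x. (g, snd x)) u) = red_append v (gen_pow g (exp_sum u))"
proof (induction u arbitrary: v)
  case Nil
  then show ?case
    by (simp add: gen_pow_def)
next
  case (Cons x u)
  then have "red_append v (map (\<lambda>x. (g, snd x)) (x # u)) = red_append (red_snoc v (g, snd x)) (gen_pow g (exp_sum u))"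
    by (simp add: freely_reduced_red_snoc)
  also have "\<dots> = red_append v (gen_pow g (exp_sum (x # u)))"
    using Cons.prems by (simp add: red_append_red_snoc_gen_pow letter_sign_def)
  finally show ?case .
qed

section \<open>The free group F(a, t) and the endomorphism \<psi>\<close>

datatype ft_gen = Ga | Gt

definition abel_norm :: "ft_gen word \<Rightarrow> nat" where
  "abel_norm w = nat \<bar>gen_exp_sum Ga w\<bar> + nat \<bar>gen_exp_sum Gt w\<bar>"

lemma abel_norm_red_append_Nil [simp]: "abel_norm (red_append [] w) = abel_norm w"
  by (simp add: abel_norm_def gen_exp_sum_red_append)

fun psi_gen :: "ft_gen \<Rightarrow> ft_gen word" where
  "psi_gen Ga = [(Ga, True)]"
| "psi_gen Gt = [(Gt, False), (Ga, True), (Gt, True)]"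

abbreviation psi :: "ft_gen word \<Rightarrow> ft_gen word" where
  "psi \<equiv> word_hom psi_gen"

lemma psi_single_Ga [simp]: "psi [(Ga, e)] = [(Ga, e)]"
  by (cases e) auto

lemma psi_single_Gt [simp]: "psi [(Gt, e)] = [(Gt, False), (Ga, e), (Gt, True)]"
  by (cases e) auto

lemma exp_sums_psi_gen [simp]:
  "gen_exp_sum Ga (psi_gen g) = 1" "gen_exp_sum Gt (psi_gen g) = 0" "exp_sum (psi_gen g) = 1"
  by (cases g; simp add: letter_sign_def)+

lemma exp_sums_psi [simp]:
  "gen_exp_sum Ga (psi w) = exp_sum w" "gen_exp_sum Gt (psi w) = 0" "exp_sum (psi w) = exp_sum w"
  by (induction w) (auto simp: letter_sign_def)

lemma exp_sum_funpow_psi [simp]: "exp_sum ((psi ^^ n) w) = exp_sum w"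
  by (induction n) auto

lemma funpow_psi_Ga [simp]: "(psi ^^ n) [(Ga, True)] = [(Ga, True)]"
  by (induction n) auto

definition s_image :: "nat \<Rightarrow> nat \<Rightarrow> ft_gen word" where
  "s_image k l = (if l = 1 then [(Ga, True)] else (psi ^^ (k - l)) [(Gt, True)])"

lemma exp_sum_s_image [simp]: "exp_sum (s_image k l) = 1"
  by (simp add: s_image_def letter_sign_def)

lemma s_image_top: "2 \<le> k \<Longrightarrow> s_image k k = [(Gt, True)]"
  by (simp add: s_image_def)

lemma s_image_psi:
  assumes "l < k"
  shows "s_image k l = psi (s_image (k - 1) l)"
proof -
  have "k - l = Suc (k - 1 - l)"
    using assms by simp
  then show ?thesis
    by (simp add: s_image_def)
qed

lemma s_image_funpow_psi:
  assumes "l \<le> j" "j \<le> m"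
  shows "s_image m l = (psi ^^ (m - j)) (s_image j l)"
proof -
  have "m - l = (m - j) + (j - l)"
    using assms by simp
  then show ?thesis
    by (simp add: s_image_def funpow_add)
qed

lemma s_image_conj:
  assumes "3 \<le> k" "k \<le> m"
  shows "s_image m (k - 1) = inv_word (s_image m k) @ [(Ga, True)] @ s_image m k"
proof -
  have top: "s_image m k = (psi ^^ (m - k)) [(Gt, True)]"
    using assms by (simp add: s_image_def)
  have "m - (k - 1) = Suc (m - k)"
    using assms by simp
  then have "s_image m (k - 1) = (psi ^^ (m - k)) (psi [(Gt, True)])"
    using assms by (simp only: s_image_def funpow_Suc_right o_apply) simp
  also have "psi [(Gt, True)] = inv_word [(Gt, True)] @ [(Ga, True)] @ [(Gt, True)]"
    by simp
  finally show ?thesis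
    by (simp only: top funpow_word_hom_append funpow_word_hom_inv_word funpow_psi_Ga)
qed

lemma exp_sums_s_image_low:
  "1 \<le> l \<Longrightarrow> l < k \<Longrightarrow> gen_exp_sum Ga (s_image k l) = 1 \<and> gen_exp_sum Gt (s_image k l) = 0"
  by (simp add: s_image_psi[of l k])

lemma exp_sums_s_image_top:
  "2 \<le> k \<Longrightarrow> gen_exp_sum Ga (s_image k k) = 0 \<and> gen_exp_sum Gt (s_image k k) = 1"
  by (simp add: s_image_top letter_sign_def)

definition s_images :: "nat \<Rightarrow> ft_gen word set" where
  "s_images k = {w. \<exists>l. 1 \<le> l \<and> l \<le> k \<and> (w = s_image k l \<or> w = inv_word (s_image k l))}"

lemma inv_word_s_images: "w \<in> s_images k \<Longrightarrow> inv_word w \<in> s_images k"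
  unfolding s_images_def by auto

lemma abs_exp_sums_s_images:
  assumes "2 \<le> k" "w \<in> s_images k"
  shows "\<bar>gen_exp_sum Ga w\<bar> + \<bar>gen_exp_sum Gt w\<bar> = 1"
proof -
  obtain l where l: "1 \<le> l" "l \<le> k" "w = s_image k l \<or> w = inv_word (s_image k l)"
    using assms(2) unfolding s_images_def by blast
  show ?thesis
  proof (cases "l = k")
    case True
    then show ?thesis
      using l exp_sums_s_image_top[OF assms(1)] by auto
  next
    case False
    then show ?thesis
      using l exp_sums_s_image_low[of l k] by auto
  qed
qed

lemma single_in_s_images: "2 \<le> k \<Longrightarrow> [(g, b)] \<in> s_images k"
proof -
  assume k: "2 \<le> k"
  define l where "l = (case g of Ga \<Rightarrow> 1 | Gt \<Rightarrow> k)"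
  have "[(g, b)] = s_image k l \<or> [(g, b)] = inv_word (s_image k l)"
    using k by (cases g; cases b) (auto simp: l_def s_image_def)
  moreover have "1 \<le> l" "l \<le> k"
    using k by (auto simp: l_def split: ft_gen.split)
  ultimately show ?thesis
    unfolding s_images_def by blast
qed

lemma s_images_Suc:
  assumes "1 \<le> k" "w \<in> s_images (Suc k)"
  obtains e where "w = [(Gt, e)]" | u where "u \<in> s_images k" "w = psi u"
proof -
  obtain l where l: "1 \<le> l" "l \<le> Suc k" "w = s_image (Suc k) l \<or> w = inv_word (s_image (Suc k) l)"
    using assms(2) unfolding s_images_def by blast
  show ?thesis
  proof (cases "l = Suc k")
    case True
    then show ?thesis
      using l assms(1) s_image_top[of "Suc k"] that(1) by auto
  next
    case False
    then have "w = psi (s_image k l) \<or> w = psi (inv_word (s_image k l))"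
      using l s_image_psi[of l "Suc k"] by auto
    moreover have "s_image k l \<in> s_images k" "inv_word (s_image k l) \<in> s_images k"
      using l False unfolding s_images_def by auto
    ultimately show ?thesis
      using that(2) by blast
  qed
qed

section \<open>A left inverse of \<psi>\<close>

text \<open>
  The state word holds the \<psi>-preimage read so far. Outside and Inside record whether the scan is
  between blocks or inside a block t^-1 a^e t = \<psi>(t^e). A letter t outside a block, or t^-1 inside
  one, leaves the image of \<psi>; the scan then falls into a sink that records every a-letter as a
  (Fail_a) or as t (Fail_t) and ignores t-letters.
\<close>

datatype scan_state =
  Outside "ft_gen word" | Inside "ft_gen word" | Fail_a "ft_gen word" | Fail_t "ft_gen word"

fun state_word :: "scan_state \<Rightarrow> ft_gen word" where
  "state_word (Outside v) = v"
| "state_word (Inside v) = v"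
| "state_word (Fail_a v) = v"
| "state_word (Fail_t v) = v"

fun relabel_mode :: "scan_state \<Rightarrow> ft_gen option" where
  "relabel_mode (Outside v) = None"
| "relabel_mode (Inside v) = Some Gt"
| "relabel_mode (Fail_a v) = Some Ga"
| "relabel_mode (Fail_t v) = Some Gt"

fun relabel :: "ft_gen option \<Rightarrow> ft_gen \<times> bool \<Rightarrow> ft_gen \<times> bool" where
  "relabel None = id"
| "relabel (Some g) = (\<lambda>x. (g, snd x))"

fun step :: "scan_state \<Rightarrow> ft_gen \<times> bool \<Rightarrow> scan_state" where
  "step (Outside v) (Ga, e) = Outside (red_snoc v (Ga, e))"
| "step (Outside v) (Gt, e) = (if e then Fail_a v else Inside v)"
| "step (Inside v) (Ga, e) = Inside (red_snoc v (Gt, e))"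
| "step (Inside v) (Gt, e) = (if e then Outside v else Fail_t v)"
| "step (Fail_a v) (Ga, e) = Fail_a (red_snoc v (Ga, e))"
| "step (Fail_a v) (Gt, e) = Fail_a v"
| "step (Fail_t v) (Ga, e) = Fail_t (red_snoc v (Gt, e))"
| "step (Fail_t v) (Gt, e) = Fail_t v"

definition scan :: "ft_gen word \<Rightarrow> scan_state" where
  "scan h = foldl step (Outside []) h"

definition unpsi :: "ft_gen word \<Rightarrow> ft_gen word" where
  "unpsi h = state_word (scan h)"

lemma scan_Nil [simp]: "scan [] = Outside []"
  by (simp add: scan_def)

lemma scan_snoc [simp]: "scan (h @ [x]) = step (scan h) x"
  by (simp add: scan_def)

lemma freely_reduced_state_word_step:
  "freely_reduced (state_word s) \<Longrightarrow> freely_reduced (state_word (step s (g, e)))"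
  by (cases s; cases g) (simp_all add: freely_reduced_red_snoc)

lemma freely_reduced_state_word_scan: "freely_reduced (state_word (scan h))"
proof (induction h rule: rev_induct)
  case (snoc x h)
  then show ?case
    by (cases x) (simp add: freely_reduced_state_word_step)
qed simp

text \<open>
  Appending a letter to a reduced word either appends it or cancels the last letter, so the scan
  state moves one step forward or one step backward.
\<close>

definition step_adj :: "ft_gen \<times> bool \<Rightarrow> scan_state \<Rightarrow> scan_state \<Rightarrow> bool" where
  "step_adj x s s' \<longleftrightarrow> s' = step s x \<or> s = step s' (inv_letter x)"

lemma step_adj_scan_red_snoc: "step_adj x (scan h) (scan (red_snoc h x))"
proof (cases "h \<noteq> [] \<and> last h = inv_letter x")
  case True
  then have "h = butlast h @ [inv_letter x]"
    by (metis append_butlast_last_id)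
  then have "scan h = step (scan (butlast h)) (inv_letter x)"
    by (metis scan_snoc)
  with True show ?thesis
    by (simp add: step_adj_def red_snoc_def)
qed (auto simp: step_adj_def red_snoc_def)

lemma step_adj_Ga:
  assumes "freely_reduced (state_word s)" "freely_reduced (state_word s')" "step_adj (Ga, e) s s'"
  shows "s' = step s (Ga, e)"
  using assms by (cases s; cases s') (auto simp: step_adj_def)

lemma step_Ga:
  "relabel_mode (step s (Ga, e)) = relabel_mode s
   \<and> state_word (step s (Ga, e)) = red_snoc (state_word s) (relabel (relabel_mode s) (Ga, e))"
  by (cases s) simp_all

lemma step_adj_psi_Gt:
  assumes "freely_reduced (state_word s1)" "freely_reduced (state_word s2)"
    and "step_adj (Gt, False) s s1" "step_adj (Ga, e) s1 s2" "step_adj (Gt, True) s2 s3"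
  shows "relabel_mode s3 = relabel_mode s
    \<and> state_word s3 = red_snoc (state_word s) (relabel (relabel_mode s) (Gt, e))"
proof -
  have "s2 = step s1 (Ga, e)"
    using assms(1,2,4) by (rule step_adj_Ga)
  with assms(3,5) show ?thesis
    by (cases s; cases s1; cases s3) (auto simp: step_adj_def)
qed

lemma step_adj_Gt_state_word: "step_adj (Gt, e) s s' \<Longrightarrow> state_word s' = state_word s"
  by (cases s; cases s'; cases e) (auto simp: step_adj_def)

lemma scan_red_append_psi_letter:
  "relabel_mode (scan (red_append h (psi [x]))) = relabel_mode (scan h)
   \<and> unpsi (red_append h (psi [x])) = red_snoc (unpsi h) (relabel (relabel_mode (scan h)) x)"
proof (cases x)
  case (Pair g e)
  note reduced = freely_reduced_state_word_scan
  show ?thesis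
  proof (cases g)
    case Ga
    have "scan (red_snoc h (Ga, e)) = step (scan h) (Ga, e)"
      using reduced reduced step_adj_scan_red_snoc by (rule step_adj_Ga)
    with Pair Ga show ?thesis
      using step_Ga[of "scan h" e] by (simp add: unpsi_def del: word_hom_Cons)
  next
    case Gt
    let ?h1 = "red_snoc h (Gt, False)"
    let ?h2 = "red_snoc ?h1 (Ga, e)"
    have "relabel_mode (scan (red_snoc ?h2 (Gt, True))) = relabel_mode (scan h)
      \<and> state_word (scan (red_snoc ?h2 (Gt, True)))
        = red_snoc (state_word (scan h)) (relabel (relabel_mode (scan h)) (Gt, e))"
      using reduced reduced step_adj_scan_red_snoc step_adj_scan_red_snoc step_adj_scan_red_snoc
      by (rule step_adj_psi_Gt)
    with Pair Gt show ?thesis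
      by (simp add: unpsi_def del: word_hom_Cons)
  qed
qed

lemma scan_red_append_psi:
  "relabel_mode (scan (red_append h (psi u))) = relabel_mode (scan h)
   \<and> unpsi (red_append h (psi u)) = red_append (unpsi h) (map (relabel (relabel_mode (scan h))) u)"
proof (induction u arbitrary: h)
  case (Cons x u)
  have "red_append h (psi (x # u)) = red_append (red_append h (psi [x])) (psi u)"
    by (metis append_Cons append_Nil red_append_append word_hom_append)
  then show ?case
    using Cons.IH[of "red_append h (psi [x])"] scan_red_append_psi_letter[of h x] by simp
qed (simp add: unpsi_def)

lemma unpsi_red_append_psi: "unpsi (red_append [] (psi w)) = red_append [] w"
  using scan_red_append_psi[of "[]" w] by (simp add: unpsi_def)

lemma unpsi_red_snoc_Gt: "unpsi (red_snoc h (Gt, e)) = unpsi h"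
  unfolding unpsi_def using step_adj_scan_red_snoc by (rule step_adj_Gt_state_word)

lemma unpsi_red_append_psi_unit:
  assumes "exp_sum u = 1 \<or> exp_sum u = - 1"
  obtains "unpsi (red_append h (psi u)) = red_append (unpsi h) u"
    | g b where "unpsi (red_append h (psi u)) = red_append (unpsi h) [(g, b)]"
proof (cases "relabel_mode (scan h)")
  case None
  then show ?thesis
    using scan_red_append_psi[of h u] that(1) by simp
next
  case (Some g)
  have "unpsi (red_append h (psi u)) = red_append (unpsi h) (map (\<lambda>x. (g, snd x)) u)"
    using scan_red_append_psi[of h u] Some by simp
  also have "\<dots> = red_append (unpsi h) (gen_pow g (exp_sum u))"
    unfolding unpsi_def by (rule red_append_collapse[OF freely_reduced_state_word_scan])
  also have "gen_pow g (exp_sum u) = [(g, exp_sum u = 1)]"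
    using assms by (auto simp: gen_pow_def)
  finally show ?thesis
    by (rule that(2))
qed

definition lip_norm :: "nat \<Rightarrow> ft_gen word \<Rightarrow> nat" where
  "lip_norm n h = abel_norm ((unpsi ^^ n) h)"

lemma lip_norm_0 [simp]: "lip_norm 0 h = abel_norm h"
  by (simp add: lip_norm_def)

lemma lip_norm_Suc: "lip_norm (Suc n) h = lip_norm n (unpsi h)"
  by (simp add: lip_norm_def funpow_Suc_right del: funpow.simps)

lemma lip_norm_Nil [simp]: "lip_norm n [] = 0"
proof -
  have "unpsi [] = []"
    by (simp add: unpsi_def)
  then show ?thesis
    by (induction n) (simp_all add: lip_norm_Suc abel_norm_def)
qed

lemma lip_norm_red_append_funpow_psi: "lip_norm n (red_append [] ((psi ^^ n) w)) = abel_norm w"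
proof (induction n arbitrary: w)
  case (Suc n)
  have "lip_norm (Suc n) (red_append [] ((psi ^^ Suc n) w)) = lip_norm n (red_append [] ((psi ^^ n) w))"
    by (simp add: lip_norm_Suc unpsi_red_append_psi)
  with Suc.IH show ?case
    by simp
qed simp

lemma lip_norm_red_append_s_images:
  assumes "2 \<le> j" "w \<in> s_images (j + n)"
  shows "lip_norm n (red_append h w) \<le> lip_norm n h + 1"
  using assms(2)
proof (induction n arbitrary: h w)
  case 0
  then have "\<bar>gen_exp_sum Ga w\<bar> + \<bar>gen_exp_sum Gt w\<bar> = 1"
    using abs_exp_sums_s_images assms(1) by simp
  moreover have "\<bar>gen_exp_sum g h + gen_exp_sum g w\<bar> \<le> \<bar>gen_exp_sum g h\<bar> + \<bar>gen_exp_sum g w\<bar>" for g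
    by (rule abs_triangle_ineq)
  ultimately have "int (abel_norm (red_append h w)) \<le> int (abel_norm h) + 1"
    by (simp add: abel_norm_def gen_exp_sum_red_append)
  then show ?case
    by simp
next
  case (Suc n)
  consider (top) e where "w = [(Gt, e)]" | (psi) u where "u \<in> s_images (j + n)" "w = psi u"
    by (rule s_images_Suc[of "j + n" w]) (use assms(1) Suc.prems in auto)
  then show ?case
  proof cases
    case top
    then show ?thesis
      by (simp add: lip_norm_Suc unpsi_red_snoc_Gt)
  next
    case psi
    have "exp_sum u = 1 \<or> exp_sum u = - 1"
      using psi(1) unfolding s_images_def by auto
    then show ?thesis
    proof (cases rule: unpsi_red_append_psi_unit[where h = h])
      case 1
      then show ?thesis
        using Suc.IH[OF psi(1)] psi(2) by (simp add: lip_norm_Suc)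
    next
      case (2 g b)
      then show ?thesis
        using Suc.IH[OF single_in_s_images] assms(1) psi(2) by (simp add: lip_norm_Suc)
    qed
  qed
qed

section \<open>Mapping G_m to F(a, t)\<close>

definition gen_image :: "nat \<Rightarrow> 'a gen \<Rightarrow> ft_gen word" where
  "gen_image m g = (case g of S k \<Rightarrow> if 1 \<le> k \<and> k \<le> m then s_image m k else [] | _ \<Rightarrow> [])"

lemma word_hom_gen_image_lift_word [simp]: "word_hom (gen_image m) (lift_word w) = []"
  by (induction w) (auto simp: lift_word_def gen_image_def)

lemma gen_image_cases: "gen_image m g = [] \<or> gen_image m g \<in> s_images m"
  unfolding gen_image_def s_images_def by (cases g) force+

lemma relator_image_cancels:
  fixes RH :: "'a word set"
  assumes "2 \<le> m" "r \<in> relsm RH T d p m"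
  shows "\<exists>W. word_hom (gen_image m) r = W @ inv_word W"
proof -
  have s1: "gen_image m (S 1 :: 'a gen) = [(Ga, True)]"
    using assms(1) by (simp add: gen_image_def s_image_def)
  consider (trivial) "word_hom (gen_image m) r = []"
    | (comm_s1) g where "g \<in> gens1 T p" "r = commutator (S 1) g"
    | (conj_s2) i where "r = rel_eq [(S 2, False), (A i, True), (S 2, True)] (letter (B i))"
    | (conj_sk) k where "3 \<le> k" "k \<le> m" "r = rel_eq [(S k, False), (S 1, True), (S k, True)] (letter (S (k - 1)))"
    using assms(2) unfolding relsm_def rels1_def
    by (auto simp: commutator_def rel_eq_def letter_def gen_image_def)
  then show ?thesis
  proof cases
    case trivial
    then show ?thesis
      by simp
  next
    case (comm_s1 g)
    then have "gen_image m g = [] \<or> g = S 1"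
      by (auto simp: gens1_def gen_image_def)
    then show ?thesis
    proof
      assume "gen_image m g = []"
      with comm_s1 s1 show ?thesis
        by (intro exI[of _ "[(Ga, True)]"]) (simp add: commutator_def)
    next
      assume "g = S 1"
      with comm_s1 s1 show ?thesis
        by (intro exI[of _ "[(Ga, True), (Ga, True)]"]) (simp add: commutator_def)
    qed
  next
    case conj_s2
    with assms(1) show ?thesis
      by (intro exI[of _ "inv_word (s_image m 2)"]) (simp add: rel_eq_def letter_def gen_image_def)
  next
    case (conj_sk k)
    have "gen_image m (S k :: 'a gen) = s_image m k" "gen_image m (S (k - 1) :: 'a gen) = s_image m (k - 1)"
      using conj_sk(1,2) by (auto simp: gen_image_def)
    with conj_sk(3) s1 have "word_hom (gen_image m) r
        = (inv_word (s_image m k) @ [(Ga, True)] @ s_image m k) @ inv_word (s_image m (k - 1))"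
      by (simp add: rel_eq_def letter_def)
    then show ?thesis
      by (simp only: s_image_conj[OF conj_sk(1,2), symmetric]) blast
  qed
qed

lemma red_append_gen_image_word_eq:
  assumes "2 \<le> m" "word_eq (relsm RH T d p m) u v"
  shows "red_append [] (word_hom (gen_image m) u) = red_append [] (word_hom (gen_image m) v)"
  using assms(2)
proof (rule red_append_word_hom_eq)
  fix r and y :: "ft_gen word"
  assume "r \<in> relsm RH T d p m" "freely_reduced y"
  then show "red_append y (word_hom (gen_image m) r) = y"
    using relator_image_cancels[OF assms(1)] red_append_cancel by metis
qed simp

lemma lip_norm_le_length:
  assumes "2 \<le> j" "j \<le> m"
  shows "lip_norm (m - j) (red_append [] (word_hom (gen_image m) v)) \<le> length v"
proof (induction v rule: rev_induct)
  case (snoc x v)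
  have "word_hom (gen_image m) [x] = [] \<or> word_hom (gen_image m) [x] \<in> s_images (j + (m - j))"
    using gen_image_cases[of m "fst x"] assms(2) by (auto simp: inv_word_s_images)
  then have "lip_norm (m - j) (red_append [] (word_hom (gen_image m) (v @ [x])))
      \<le> lip_norm (m - j) (red_append [] (word_hom (gen_image m) v)) + 1"
    using lip_norm_red_append_s_images[OF assms(1)] by auto
  with snoc show ?case
    by simp
qed simp

lemma lip_norm_gen_image_s_pows:
  assumes "1 \<le> i" "i < j" "j \<le> m"
  shows "lip_norm (m - j) (red_append [] (word_hom (gen_image m) (gen_pow (S i :: 'a gen) p' @ gen_pow (S j) q)))
    = nat \<bar>p'\<bar> + nat \<bar>q\<bar>"
proof -
  have "gen_image m (S i :: 'a gen) = (psi ^^ (m - j)) (s_image j i)"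
    "gen_image m (S j :: 'a gen) = (psi ^^ (m - j)) (s_image j j)"
    using assms s_image_funpow_psi[of i j m] s_image_funpow_psi[of j j m] by (simp_all add: gen_image_def)
  then have "word_hom (gen_image m) (gen_pow (S i :: 'a gen) p' @ gen_pow (S j) q)
      = (psi ^^ (m - j)) (word_pow (s_image j i) p' @ word_pow (s_image j j) q)"
    by (simp add: word_hom_gen_pow funpow_word_hom_word_pow)
  moreover have "2 \<le> j"
    using assms by simp
  ultimately show ?thesis
    using exp_sums_s_image_low[OF assms(1,2)] exp_sums_s_image_top
    by (simp add: lip_norm_red_append_funpow_psi abel_norm_def del: funpow_word_hom_append)
qed

theorem lemma3p4:
  fixes T :: "'a set" and RH :: "'a word set" and d :: "nat \<Rightarrow> 'a"
    and p m i j :: nat and p' q :: int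
  assumes finT: "finite T"
    and finR: "finite RH"
    and relsT: "\<forall>r \<in> RH. set (map fst r) \<subseteq> T"
    and dT: "\<forall>k < p. d k \<in> T"
    and d_inj: "inj_on d {..<p}"
    and F_free: "\<forall>w :: (nat \<times> bool) list. w \<noteq> [] \<and> freely_reduced w \<and> set (map fst w) \<subseteq> {..<p}
                   \<longrightarrow> \<not> word_eq RH (map (\<lambda>(k, b). (d k, b)) w) []"
    and ij: "1 \<le> i" "i < j" "j \<le> m"
  shows "word_length (relsm RH T d p m) (gensm T p m) (gen_pow (S i) p' @ gen_pow (S j) q)
           = nat \<bar>p'\<bar> + nat \<bar>q\<bar>"
proof -
  define w :: "'a gen word" where "w = gen_pow (S i) p' @ gen_pow (S j) q"
  have j: "2 \<le> j"
    using ij by simp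
  have "S i \<in> gensm T p m" "S j \<in> gensm T p m"
    using ij by (auto simp: gensm_def gens1_def)
  then have gens: "set (map fst w) \<subseteq> gensm T p m"
    by (auto simp: w_def gen_pow_def)
  have length: "length w = nat \<bar>p'\<bar> + nat \<bar>q\<bar>"
    by (simp add: w_def gen_pow_def)
  have minimal: "length w \<le> length v" if "word_eq (relsm RH T d p m) v w" for v
    using lip_norm_le_length[OF j ij(3), of v] lip_norm_gen_image_s_pows[OF ij, where 'a = 'a]
      red_append_gen_image_word_eq[OF _ that] j ij(3) length
    unfolding w_def by simp
  have "word_length (relsm RH T d p m) (gensm T p m) w = length w"
    by (rule word_length_eqI[OF gens]) (simp add: minimal)
  then show ?thesis
    using length by (simp only: w_def)
qed

end
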